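(* Let $d,k\ge 1$, $0<\alpha<1$, $v>0$, and let $S=\{(\mathbf{x}_1,y_1),\dots,(\mathbf{x}_n,y_n)\}\subseteq \mathcal{X}\times\mathcal{Y}$, where $\mathcal{X}=\{\mathbf{x}\in\mathbb{R}^d:\|\mathbf{x}\|\le 1\}$ and $\mathcal{Y}=\{\pm1\}$, be such that there is $\mathbf{w}^*\in\mathbb{R}^d$ with $y_i\langle \mathbf{w}^*,\mathbf{x}_i\rangle\ge 1$ for all $i$. Consider, as a function of $W\in\mathbb{R}^{2k\times d}$, the loss $$L_S(W)=\frac1n\sum_{i=1}^n \max\{1-y_iN_W(\mathbf{x}_i),0\},\qquad N_W(\mathbf{x})=\mathbf{v}^\top\sigma(W\mathbf{x}),$$ where $\sigma(z)=\max\{\alpha z,z\}$ is applied entrywise and $\mathbf{v}=(v,\dots,v,-v,\dots,-v)\in\mathbb{R}^{2k}$ ($k$ entries equal to $v$ followed by $k$ entries equal to $-v$). Then (1) every critical point of $L_S$ is a global minimum of $L_S$; and (2) $L_S$ is not convex.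
   Context: Gradients are computed with the convention $\sigma'(z)=1$ for $z\ge 0$ and $\sigma'(z)=\alpha$ for $z<0$, and for a single example $(\mathbf{x},y)$ the gradient of $\max\{1-yN_W(\mathbf{x}),0\}$ is taken to be $0$ when $yN_W(\mathbf{x})\ge 1$; when $yN_W(\mathbf{x})<1$ its gradient with respect to the $j$-th row $\mathbf{w}_j$ of $W$ is $-y\,v_j\,\sigma'(\langle \mathbf{w}_j,\mathbf{x}\rangle)\,\mathbf{x}$. The gradient of $L_S$ is the average of these per-example gradients, and a critical point is a $W$ where this gradient is zero. The minimum value of $L_S$ is $0$. *)

theory Defs
  imports "HOL-Analysis.Analysis"
begin

definition leaky :: "real \<Rightarrow> real \<Rightarrow> real" where
  "leaky \<alpha> z = max (\<alpha> * z) z"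

definition leaky_deriv :: "real \<Rightarrow> real \<Rightarrow> real" where
  "leaky_deriv \<alpha> z = (if z \<ge> 0 then 1 else \<alpha>)"

text \<open>Output weights: hidden units indexed by 'k + 'k (2k units, k = CARD('k));
  the first k (Inl) get weight v, the last k (Inr) get weight -v.\<close>
definition outw :: "real \<Rightarrow> 'k + 'k \<Rightarrow> real" where
  "outw v j = (case j of Inl _ \<Rightarrow> v | Inr _ \<Rightarrow> - v)"

definition net :: "real \<Rightarrow> real \<Rightarrow> real^'d^('k::finite + 'k) \<Rightarrow> real^'d \<Rightarrow> real" where
  "net \<alpha> v W x = (\<Sum>j\<in>UNIV. outw v j * leaky \<alpha> (W $ j \<bullet> x))"

definition loss :: "real \<Rightarrow> real \<Rightarrow> ((real^'d) \<times> real) list \<Rightarrow> real^'d^('k::finite + 'k) \<Rightarrow> real" where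
  "loss \<alpha> v S W = (1 / real (length S)) *
     (\<Sum>(x, y)\<leftarrow>S. max (1 - y * net \<alpha> v W x) 0)"

definition loss_grad :: "real \<Rightarrow> real \<Rightarrow> ((real^'d) \<times> real) list \<Rightarrow> real^'d^('k::finite + 'k) \<Rightarrow> real^'d^('k + 'k)" where
  "loss_grad \<alpha> v S W = (\<chi> j. (1 / real (length S)) *\<^sub>R
     (\<Sum>(x, y)\<leftarrow>S. (if y * net \<alpha> v W x < 1
        then (- y * outw v j * leaky_deriv \<alpha> (W $ j \<bullet> x)) *\<^sub>R x else 0)))"

definition critical_point :: "real \<Rightarrow> real \<Rightarrow> ((real^'d) \<times> real) list \<Rightarrow> real^'d^('k::finite + 'k) \<Rightarrow> bool" where
  "critical_point \<alpha> v S W \<longleftrightarrow> loss_grad \<alpha> v S W = 0"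

end

theory Submission
  imports Defs
begin

text \<open>Critical points: pair the gradient of a row with positive output weight with a separator
  w. Each example with active hinge contributes v \<sigma>' y \<langle>w,x\<rangle> > 0, so a vanishing gradient
  forces every hinge to be inactive, i.e. loss 0.

  Non-convexity: rescale w to a separator u whose smallest margin is attained at an example
  (x0, y0) with y0 \<langle>u,x0\<rangle> = 1, and use networks with one positive unit p u and one negative
  unit q u. By positive homogeneity of \<sigma> such a network has margin y \<langle>u,x\<rangle> times a quantity
  depending only on p, q and the label, and one finds two pairs (p, q) fitting every label
  whose midpoint fails at x0.\<close>

lemma leaky_scale: "0 \<le> c \<Longrightarrow> leaky \<alpha> (c * z) = c * leaky \<alpha> z"
  unfolding leaky_def by (simp add: max_mult_distrib_left algebra_simps)

lemma leaky_of_nonneg: "0 \<le> z \<Longrightarrow> \<alpha> \<le> 1 \<Longrightarrow> leaky \<alpha> z = z"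
  unfolding leaky_def using mult_right_mono[of \<alpha> 1 z] by (simp add: max.absorb2)

lemma leaky_of_nonpos: "z \<le> 0 \<Longrightarrow> \<alpha> \<le> 1 \<Longrightarrow> leaky \<alpha> z = \<alpha> * z"
  unfolding leaky_def using mult_right_mono_neg[of \<alpha> 1 z] by (simp add: max.absorb1)

lemma loss_nonneg: "0 \<le> loss \<alpha> v S W"
  unfolding loss_def by (intro mult_nonneg_nonneg sum_list_nonneg) auto

lemma loss_eq_0_iff: "loss \<alpha> v S W = 0 \<longleftrightarrow> (\<forall>(x, y)\<in>set S. 1 \<le> y * net \<alpha> v W x)"
proof (cases "S = []")
  case False
  have "loss \<alpha> v S W = 0 \<longleftrightarrow> (\<Sum>(x, y)\<leftarrow>S. max (1 - y * net \<alpha> v W x) 0) = 0"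
    using False by (simp add: loss_def)
  also have "\<dots> \<longleftrightarrow> (\<forall>(x, y)\<in>set S. 1 \<le> y * net \<alpha> v W x)"
    by (subst sum_list_nonneg_eq_0_iff) (auto simp: max_def split: if_splits)
  finally show ?thesis .
qed (simp add: loss_def)

lemma inner_sum_list_right: "w \<bullet> sum_list (map f xs) = (\<Sum>p\<leftarrow>xs. w \<bullet> f p)"
  by (induction xs) (simp_all add: inner_add_right)

lemma inner_loss_grad:
  "w \<bullet> (loss_grad \<alpha> v S W $ j) = - (outw v j / real (length S)) *
     (\<Sum>(x, y)\<leftarrow>S. if y * net \<alpha> v W x < 1
        then leaky_deriv \<alpha> (W $ j \<bullet> x) * (y * (w \<bullet> x)) else 0)"
  unfolding loss_grad_def
  by (simp add: inner_sum_list_right sum_list_const_mult[symmetric] case_prod_beta o_def)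
    (intro arg_cong[where f = sum_list] map_cong, auto)

lemma critical_point_fits_data:
  assumes "0 < \<alpha>" "0 < v"
    and sep: "\<forall>(x, y)\<in>set S. 1 \<le> y * (w \<bullet> x)"
    and "critical_point \<alpha> v S W"
  shows "\<forall>(x, y)\<in>set S. 1 \<le> y * net \<alpha> v W x"
proof -
  define j :: "'b + 'b" where "j = Inl undefined"
  have "outw v j = v"
    by (simp add: j_def outw_def)
  define contribution where "contribution = (\<lambda>(x, y). if y * net \<alpha> v W x < 1
        then leaky_deriv \<alpha> (W $ j \<bullet> x) * (y * (w \<bullet> x)) else 0)"
  have deriv_pos: "0 < leaky_deriv \<alpha> z" for z
    using \<open>0 < \<alpha>\<close> by (simp add: leaky_deriv_def)
  have contribution_pos: "0 < contribution (x, y)" if "(x, y) \<in> set S" "y * net \<alpha> v W x < 1" for x y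
    using that sep deriv_pos by (auto simp: contribution_def)
  have contribution_nonneg: "0 \<le> contribution (x, y)" if "(x, y) \<in> set S" for x y
    using contribution_pos[OF that] by (fastforce simp: contribution_def)
  have "0 = w \<bullet> (loss_grad \<alpha> v S W $ j)"
    using \<open>critical_point \<alpha> v S W\<close> by (simp add: critical_point_def)
  also have "\<dots> = - (v / real (length S)) * sum_list (map contribution S)"
    by (simp add: inner_loss_grad contribution_def \<open>outw v j = v\<close>)
  finally have "sum_list (map contribution S) = 0 \<or> S = []"
    using \<open>0 < v\<close> by auto
  then have "\<forall>p\<in>set S. contribution p = 0"
    using contribution_nonneg by (subst (asm) sum_list_nonneg_eq_0_iff) auto
  then show ?thesis
    using contribution_pos by fastforce
qed

lemma critical_point_imp_global_min:
  assumes "0 < \<alpha>" "0 < v" "\<forall>(x, y)\<in>set S. 1 \<le> y * (w \<bullet> x)"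
    and "critical_point \<alpha> v S W"
  shows "loss \<alpha> v S W \<le> loss \<alpha> v S W'"
  using critical_point_fits_data[OF assms] loss_nonneg[of \<alpha> v S W']
  by (simp add: loss_eq_0_iff[THEN iffD2])

definition twin_weights :: "'k \<Rightarrow> real \<Rightarrow> real \<Rightarrow> real^'d \<Rightarrow> real^'d^('k::finite + 'k)" where
  "twin_weights a p q u =
     (\<chi> j. if j = Inl a then p *\<^sub>R u else if j = Inr a then q *\<^sub>R u else 0)"

text \<open>The margin y N(x) of a twin network per unit of y \<langle>u,x\<rangle>, see label_times_net_twin_weights.\<close>
definition unit_margin :: "real \<Rightarrow> real \<Rightarrow> real \<Rightarrow> real \<Rightarrow> real" where
  "unit_margin \<alpha> y p q = y * (leaky \<alpha> (y * p) - leaky \<alpha> (y * q))"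

lemma net_twin_weights:
  "net \<alpha> v (twin_weights a p q u) x = v * (leaky \<alpha> (p * (u \<bullet> x)) - leaky \<alpha> (q * (u \<bullet> x)))"
proof -
  have "outw v j * leaky \<alpha> (twin_weights a p q u $ j \<bullet> x) =
        (if j = Inl a then v * leaky \<alpha> (p * (u \<bullet> x)) else 0) +
        (if j = Inr a then - v * leaky \<alpha> (q * (u \<bullet> x)) else 0)" for j
    by (auto simp: twin_weights_def outw_def leaky_def split: sum.splits)
  then show ?thesis
    unfolding net_def by (simp add: sum.distrib algebra_simps)
qed

lemma twin_weights_midpoint:
  "(1/2) *\<^sub>R twin_weights a p1 q1 u + (1/2) *\<^sub>R twin_weights a p2 q2 u =
   twin_weights a ((p1 + p2) / 2) ((q1 + q2) / 2) u"
  by (simp add: twin_weights_def vec_eq_iff algebra_simps)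

lemma label_times_net_twin_weights:
  assumes "y = 1 \<or> y = -1" and "0 \<le> y * (u \<bullet> x)"
  shows "y * net \<alpha> v (twin_weights a p q u) x = v * (y * (u \<bullet> x)) * unit_margin \<alpha> y p q"
proof -
  define t where "t = y * (u \<bullet> x)"
  have rescale: "r * (u \<bullet> x) = t * (y * r)" for r
    using assms(1) unfolding t_def by (elim disjE) simp_all
  have "leaky \<alpha> (r * (u \<bullet> x)) = t * leaky \<alpha> (y * r)" for r
    unfolding rescale by (rule leaky_scale) (use assms(2) in \<open>simp add: t_def\<close>)
  then show ?thesis
    unfolding t_def[symmetric] by (simp add: net_twin_weights unit_margin_def algebra_simps)
qed

lemma unit_margin_scale: "0 \<le> c \<Longrightarrow> unit_margin \<alpha> y (c * p) (c * q) = c * unit_margin \<alpha> y p q"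
  using leaky_scale[of c \<alpha> "y * p"] leaky_scale[of c \<alpha> "y * q"]
  by (simp add: unit_margin_def algebra_simps)

lemma unit_margin_reflect: "unit_margin \<alpha> y (- q) (- p) = unit_margin \<alpha> (- y) p q"
  by (simp add: unit_margin_def algebra_simps)

lemma loss_twin_weights_eq_0:
  assumes "\<forall>(x, y)\<in>set S. (y = 1 \<or> y = -1) \<and> 1 \<le> y * (u \<bullet> x)"
    and "1 \<le> v * unit_margin \<alpha> 1 p q" and "1 \<le> v * unit_margin \<alpha> (-1) p q"
  shows "loss \<alpha> v S (twin_weights a p q u) = 0"
  unfolding loss_eq_0_iff
proof clarify
  fix x y assume "(x, y) \<in> set S"
  then have y: "y = 1 \<or> y = -1" and margin: "1 \<le> y * (u \<bullet> x)"
    using assms(1) by auto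
  have "1 \<le> v * unit_margin \<alpha> y p q"
    using y assms(2,3) by auto
  then have "1 * 1 \<le> (y * (u \<bullet> x)) * (v * unit_margin \<alpha> y p q)"
    using margin by (intro mult_mono) auto
  moreover have "y * net \<alpha> v (twin_weights a p q u) x = v * (y * (u \<bullet> x)) * unit_margin \<alpha> y p q"
    by (rule label_times_net_twin_weights[OF y]) (use margin in simp)
  ultimately show "1 \<le> y * net \<alpha> v (twin_weights a p q u) x"
    by (metis mult.assoc mult.commute mult_1)
qed

lemma unit_margin_witnesses:
  assumes "0 < \<alpha>" "\<alpha> < 1" "(1 + \<alpha>) * s = 1"
  shows "1 \<le> unit_margin \<alpha> 1 (-s) (-s - 1/\<alpha>)" and "1 \<le> unit_margin \<alpha> (-1) (-s) (-s - 1/\<alpha>)"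
    and "1 \<le> unit_margin \<alpha> 1 s (-s)" and "1 \<le> unit_margin \<alpha> (-1) s (-s)"
    and "unit_margin \<alpha> 1 0 (-s - 1/(2*\<alpha>)) < 1"
proof -
  have s_eq: "s = 1 / (1 + \<alpha>)"
    using assms(1,3) by (simp add: field_simps)
  have s: "0 < s" "\<alpha> * s < 1/2" "1 \<le> 1/\<alpha>"
    unfolding s_eq using assms(1,2) by (simp_all add: field_simps)
  have pos: "leaky \<alpha> z = z" if "0 \<le> z" for z
    using leaky_of_nonneg that assms(2) by simp
  have neg: "leaky \<alpha> z = \<alpha> * z" if "z \<le> 0" for z
    using leaky_of_nonpos that assms(2) by simp
  have "leaky \<alpha> 0 = 0" "leaky \<alpha> s = s" "leaky \<alpha> (s + 1/\<alpha>) = s + 1/\<alpha>"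
    using s by (simp_all add: pos)
  moreover have "leaky \<alpha> (-s) = - (\<alpha> * s)"
    using neg[of "-s"] s by simp
  moreover have "leaky \<alpha> (-s - 1/\<alpha>) = - (\<alpha> * s) - 1"
    using neg[of "-s - 1/\<alpha>"] s assms(1) by (simp add: algebra_simps)
  moreover have "leaky \<alpha> (-s - 1/(2*\<alpha>)) = - (\<alpha> * s) - 1/2"
    using neg[of "-s - 1/(2*\<alpha>)"] s assms(1) by (simp add: algebra_simps)
  ultimately show "1 \<le> unit_margin \<alpha> 1 (-s) (-s - 1/\<alpha>)" "1 \<le> unit_margin \<alpha> (-1) (-s) (-s - 1/\<alpha>)"
    "1 \<le> unit_margin \<alpha> 1 s (-s)" "1 \<le> unit_margin \<alpha> (-1) s (-s)"
    "unit_margin \<alpha> 1 0 (-s - 1/(2*\<alpha>)) < 1"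
    using s assms(3) by (simp_all add: unit_margin_def algebra_simps)
qed

text \<open>The unit margins for the two labels sum to (1 + \<alpha>)(p - q), which is linear in (p, q), so a
  midpoint of two pairs fitting both labels fails for at most one label: the witnesses must
  depend on y0.\<close>
lemma twin_witnesses:
  assumes "0 < \<alpha>" "\<alpha> < 1" "0 < v" "y0 = 1 \<or> y0 = -1"
  obtains p1 q1 p2 q2 where
    "\<forall>y\<in>{1, -1}. 1 \<le> v * unit_margin \<alpha> y p1 q1 \<and> 1 \<le> v * unit_margin \<alpha> y p2 q2"
    "v * unit_margin \<alpha> y0 ((p1 + p2) / 2) ((q1 + q2) / 2) < 1"
proof -
  obtain P1 Q1 P2 Q2 where
    fit: "\<forall>y\<in>{1, -1}. 1 \<le> unit_margin \<alpha> y P1 Q1 \<and> 1 \<le> unit_margin \<alpha> y P2 Q2" and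
    mid: "unit_margin \<alpha> 1 ((P1 + P2) / 2) ((Q1 + Q2) / 2) < 1"
  proof
    define s where "s = 1 / (1 + \<alpha>)"
    have "(1 + \<alpha>) * s = 1"
      using assms(1) by (simp add: s_def)
    note witnesses = unit_margin_witnesses[OF assms(1,2) this]
    show "\<forall>y\<in>{1, -1}. 1 \<le> unit_margin \<alpha> y (-s) (-s - 1/\<alpha>) \<and> 1 \<le> unit_margin \<alpha> y s (-s)"
      using witnesses by simp
    have "(-s + s) / 2 = 0" "(-s - 1/\<alpha> + -s) / 2 = -s - 1/(2*\<alpha>)"
      using assms(1) by (simp_all add: field_simps)
    then show "unit_margin \<alpha> 1 ((-s + s) / 2) ((-s - 1/\<alpha> + -s) / 2) < 1"
      using witnesses(5) by (simp only:)
  qed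
  define c where "c = 1 / v"
  have scaled: "v * unit_margin \<alpha> y (c * p) (c * q) = unit_margin \<alpha> y p q" for y p q
    using unit_margin_scale[of c \<alpha> y p q] assms(3) by (simp add: c_def)
  have midpoint: "(c * a + c * b) / 2 = c * ((a + b) / 2)" for a b
    by (simp add: algebra_simps)
  from assms(4) show ?thesis
  proof
    assume "y0 = 1"
    show ?thesis
      by (rule that[of "c * P1" "c * Q1" "c * P2" "c * Q2"])
        (use fit mid \<open>y0 = 1\<close> in \<open>simp_all only: midpoint scaled\<close>)
  next
    txt \<open>Reflecting (p, q) to (-q, -p) exchanges the roles of the two labels.\<close>
    assume "y0 = -1"
    have "- (c * a) + - (c * b) = - (c * a + c * b)" for a b
      by simp
    then show ?thesis
      using fit mid \<open>y0 = -1\<close>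
      by (intro that[of "- (c * Q1)" "- (c * P1)" "- (c * Q2)" "- (c * P2)"])
        (simp_all only: unit_margin_reflect minus_divide_left[symmetric] midpoint scaled, auto)
  qed
qed

lemma loss_not_convex_on:
  assumes "0 < \<alpha>" "\<alpha> < 1" "0 < v"
    and sep: "\<forall>(x, y)\<in>set S. (y = 1 \<or> y = -1) \<and> 1 \<le> y * (u \<bullet> x)"
    and tight: "(x0, y0) \<in> set S" "y0 * (u \<bullet> x0) = 1"
  shows "\<not> convex_on UNIV (loss \<alpha> v S :: real^'d^('k::finite + 'k) \<Rightarrow> real)"
proof
  assume convex: "convex_on UNIV (loss \<alpha> v S :: real^'d^('k + 'k) \<Rightarrow> real)"
  have y0: "y0 = 1 \<or> y0 = -1"
    using sep tight(1) by auto
  obtain p1 q1 p2 q2 where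
    fit: "\<forall>y\<in>{1, -1}. 1 \<le> v * unit_margin \<alpha> y p1 q1 \<and> 1 \<le> v * unit_margin \<alpha> y p2 q2" and
    mid: "v * unit_margin \<alpha> y0 ((p1 + p2) / 2) ((q1 + q2) / 2) < 1"
    using twin_witnesses[OF assms(1-3) y0] .
  define a :: 'k where "a = undefined"
  define W where "W = twin_weights a ((p1 + p2) / 2) ((q1 + q2) / 2) u"
  have "loss \<alpha> v S (twin_weights a p1 q1 u) = 0" "loss \<alpha> v S (twin_weights a p2 q2 u) = 0"
    using fit by (auto intro: loss_twin_weights_eq_0[OF sep])
  then have "loss \<alpha> v S W \<le> 0"
    using convex_onD[OF convex, of "1/2" "twin_weights a p1 q1 u" "twin_weights a p2 q2 u"]
    by (simp add: W_def twin_weights_midpoint)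
  then have "loss \<alpha> v S W = 0"
    using loss_nonneg[of \<alpha> v S W] by linarith
  then have "1 \<le> y0 * net \<alpha> v W x0"
    using tight(1) by (auto simp: loss_eq_0_iff)
  moreover have "y0 * net \<alpha> v W x0 = v * (y0 * (u \<bullet> x0)) * unit_margin \<alpha> y0 ((p1 + p2) / 2) ((q1 + q2) / 2)"
    unfolding W_def by (rule label_times_net_twin_weights[OF y0]) (simp add: tight(2))
  ultimately show False
    using mid tight(2) by simp
qed

lemma exists_tight_separator:
  fixes w :: "'a::real_inner"
  assumes "S \<noteq> []" and sep: "\<forall>(x, y)\<in>set S. 1 \<le> y * (w \<bullet> x)"
  obtains u x0 y0 where "\<forall>(x, y)\<in>set S. 1 \<le> y * (u \<bullet> x)" "(x0, y0) \<in> set S" "y0 * (u \<bullet> x0) = 1"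
proof -
  define margin :: "'a \<times> real \<Rightarrow> real" where "margin = (\<lambda>(x, y). y * (w \<bullet> x))"
  obtain x0 y0 where x0: "(x0, y0) \<in> set S"
    and least: "\<And>x y. (x, y) \<in> set S \<Longrightarrow> margin (x0, y0) \<le> margin (x, y)"
  proof -
    have "set S \<noteq> {}"
      using assms(1) by simp
    then obtain p where "is_arg_min margin (\<lambda>p. p \<in> set S) p"
      using ex_is_arg_min_if_finite[OF finite_set, of S margin] by auto
    then show thesis
      using that[of "fst p" "snd p"] by (simp add: is_arg_min_linorder)
  qed
  define m where "m = margin (x0, y0)"
  have "1 \<le> m"
    using sep x0 by (auto simp: m_def margin_def)
  have fits: "1 \<le> y * ((1 / m) *\<^sub>R w \<bullet> x)" if "(x, y) \<in> set S" for x y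
  proof -
    have "m \<le> y * (w \<bullet> x)"
      using least[OF that] by (simp add: m_def margin_def)
    then show ?thesis
      using \<open>1 \<le> m\<close> by (simp add: field_simps)
  qed
  have "y0 * ((1 / m) *\<^sub>R w \<bullet> x0) = (1 / m) * (y0 * (w \<bullet> x0))"
    by simp
  also have "\<dots> = 1"
    using \<open>1 \<le> m\<close> by (simp add: m_def[unfolded margin_def, simplified, symmetric])
  finally show thesis
    using fits by (intro that[of "(1 / m) *\<^sub>R w", OF _ x0]) auto
qed

theorem proposition1:
  fixes S :: "((real^'d) \<times> real) list" and \<alpha> v :: real
  assumes "0 < \<alpha>" and "\<alpha> < 1" and "0 < v"
    and "S \<noteq> []" and "distinct S"
    and "\<forall>(x, y)\<in>set S. norm x \<le> 1 \<and> (y = 1 \<or> y = -1)"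
    and "\<exists>w. \<forall>(x, y)\<in>set S. y * (w \<bullet> x) \<ge> 1"
  shows "(\<forall>W :: real^'d^('k::finite + 'k). critical_point \<alpha> v S W \<longrightarrow>
            (\<forall>W' :: real^'d^('k + 'k). loss \<alpha> v S W \<le> loss \<alpha> v S W'))
         \<and> \<not> convex_on UNIV (loss \<alpha> v S :: real^'d^('k + 'k) \<Rightarrow> real)"
proof
  obtain w where sep: "\<forall>(x, y)\<in>set S. 1 \<le> y * (w \<bullet> x)"
    using assms(7) by auto
  show "\<forall>W :: real^'d^('k + 'k). critical_point \<alpha> v S W \<longrightarrow>
          (\<forall>W' :: real^'d^('k + 'k). loss \<alpha> v S W \<le> loss \<alpha> v S W')"
    using critical_point_imp_global_min[OF assms(1,3) sep] by blast
  obtain u x0 y0 where u: "\<forall>(x, y)\<in>set S. 1 \<le> y * (u \<bullet> x)"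
    and tight: "(x0, y0) \<in> set S" "y0 * (u \<bullet> x0) = 1"
    using exists_tight_separator[OF assms(4) sep] .
  have "\<forall>(x, y)\<in>set S. (y = 1 \<or> y = -1) \<and> 1 \<le> y * (u \<bullet> x)"
    using u assms(6) by auto
  then show "\<not> convex_on UNIV (loss \<alpha> v S :: real^'d^('k + 'k) \<Rightarrow> real)"
    by (rule loss_not_convex_on[OF assms(1-3) _ tight])
qed

end
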